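(* For every set $\Gamma\cup\{\varphi\}$ of formulas over $\Sigma^\circ$: if $\Gamma\vDash^{\mathsf{RN}}_{\mathcal{M}_{\bf Cila}}\varphi$ then $\Gamma\vdash_{\bf Cila}\varphi$.
   Context: $\Sigma^\circ$ has unary $\neg,\circ$ and binary $\wedge,\vee,\to$. ${\bf Cila}$ is the Hilbert calculus with Modus Ponens as only rule and axiom schemata: $\alpha\to(\beta\to\alpha)$; $(\alpha\to(\beta\to\gamma))\to((\alpha\to\beta)\to(\alpha\to\gamma))$; $\alpha\to(\beta\to(\alpha\wedge\beta))$; $(\alpha\wedge\beta)\to\alpha$; $(\alpha\wedge\beta)\to\beta$; $\alpha\to(\alpha\vee\beta)$; $\beta\to(\alpha\vee\beta)$; $(\alpha\to\gamma)\to((\beta\to\gamma)\to((\alpha\vee\beta)\to\gamma))$; $\alpha\vee\neg\alpha$; $\alpha\vee(\alpha\to\beta)$; $\circ\alpha\to(\alpha\to(\neg\alpha\to\beta))$; $\neg(\alpha\wedge\neg\alpha)\to\circ\alpha$; $\neg\circ\alpha\to(\alpha\wedge\neg\alpha)$; $\neg\neg\alpha\to\alpha$; $(\circ\alpha\wedge\circ\beta)\to\circ(\alpha\#\beta)$ for $\#\in\{\vee,\wedge,\to\}$. $\mathcal{A}_{\bf Cila}$ is the $\Sigma^\circ$-multialgebra with universe $\{F,t,T\}$, $D=\{t,T\}$, and: $F\tilde\vee F=\{F\}$, $F\tilde\vee T=T\tilde\vee F=T\tilde\vee T=\{T\}$, $x\tilde\vee y=D$ whenever $t\in\{x,y\}$;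 $x\tilde\wedge y=\{F\}$ if $F\in\{x,y\}$, $T\tilde\wedge T=\{T\}$, $t\tilde\wedge t=t\tilde\wedge T=T\tilde\wedge t=D$; $\tilde\neg F=\{T\}$, $\tilde\neg t=D$, $\tilde\neg T=\{F\}$; $F\tilde\to F=F\tilde\to T=T\tilde\to T=\{T\}$, $t\tilde\to F=T\tilde\to F=\{F\}$, $x\tilde\to t=D$ for all $x$, $t\tilde\to T=D$; $\tilde\circ F=\tilde\circ T=\{T\}$, $\tilde\circ t=\{F\}$. A valuation is a map with $\nu(\#\alpha)\in\tilde\#\nu(\alpha)$ and $\nu(\alpha\#\beta)\in\nu(\alpha)\tilde\#\nu(\beta)$. $\mathcal{F}_{\bf Cila}$ is the set of valuations with $\nu(\alpha)=t\Rightarrow\nu(\alpha\wedge\neg\alpha)=T$ for all $\alpha$. $\Gamma\vDash^{\mathsf{RN}}_{\mathcal{M}_{\bf Cila}}\varphi$ iff every $\nu\in\mathcal{F}_{\bf Cila}$ with $\nu[\Gamma]\subseteq D$ has $\nu(\varphi)\in D$. *)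

theory Defs
  imports Main
begin

datatype fm =
    Var nat
  | Neg fm
  | Circ fm
  | And fm fm
  | Or fm fm
  | Imp fm fm

inductive cila_axiom :: "fm \<Rightarrow> bool" where
  Ax1: "cila_axiom (Imp a (Imp b a))"
| Ax2: "cila_axiom (Imp (Imp a (Imp b c)) (Imp (Imp a b) (Imp a c)))"
| Ax3: "cila_axiom (Imp a (Imp b (And a b)))"
| Ax4: "cila_axiom (Imp (And a b) a)"
| Ax5: "cila_axiom (Imp (And a b) b)"
| Ax6: "cila_axiom (Imp a (Or a b))"
| Ax7: "cila_axiom (Imp b (Or a b))"
| Ax8: "cila_axiom (Imp (Imp a c) (Imp (Imp b c) (Imp (Or a b) c)))"
| Ax9: "cila_axiom (Or a (Neg a))"
| Ax10: "cila_axiom (Or a (Imp a b))"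
| bc1: "cila_axiom (Imp (Circ a) (Imp a (Imp (Neg a) b)))"
| ci: "cila_axiom (Imp (Neg (And a (Neg a))) (Circ a))"
| cl: "cila_axiom (Imp (Neg (Circ a)) (And a (Neg a)))"
| cf: "cila_axiom (Imp (Neg (Neg a)) a)"
| ca_or: "cila_axiom (Imp (And (Circ a) (Circ b)) (Circ (Or a b)))"
| ca_and: "cila_axiom (Imp (And (Circ a) (Circ b)) (Circ (And a b)))"
| ca_imp: "cila_axiom (Imp (And (Circ a) (Circ b)) (Circ (Imp a b)))"

inductive cila_derives :: "fm set \<Rightarrow> fm \<Rightarrow> bool" where
  prem: "a \<in> \<Gamma> \<Longrightarrow> cila_derives \<Gamma> a"
| axiom: "cila_axiom a \<Longrightarrow> cila_derives \<Gamma> a"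
| mp: "cila_derives \<Gamma> a \<Longrightarrow> cila_derives \<Gamma> (Imp a b) \<Longrightarrow> cila_derives \<Gamma> b"

datatype tv = F | t | T

definition Dset :: "tv set" where "Dset = {t, T}"

fun mneg :: "tv \<Rightarrow> tv set" where
  "mneg F = {T}" | "mneg t = Dset" | "mneg T = {F}"

fun mcirc :: "tv \<Rightarrow> tv set" where
  "mcirc F = {T}" | "mcirc t = {F}" | "mcirc T = {T}"

definition mor :: "tv \<Rightarrow> tv \<Rightarrow> tv set" where
  "mor x y = (if x = t \<or> y = t then Dset
              else if x = F \<and> y = F then {F} else {T})"

definition mand :: "tv \<Rightarrow> tv \<Rightarrow> tv set" where
  "mand x y = (if x = F \<or> y = F then {F}
               else if x = T \<and> y = T then {T} else Dset)"

definition mimp :: "tv \<Rightarrow> tv \<Rightarrow> tv set" where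
  "mimp x y = (if y = t then Dset
               else if y = T then (if x = t then Dset else {T})
               else (if x = F then {T} else {F}))"

definition valuation :: "(fm \<Rightarrow> tv) \<Rightarrow> bool" where
  "valuation v \<longleftrightarrow>
     (\<forall>a. v (Neg a) \<in> mneg (v a)) \<and>
     (\<forall>a. v (Circ a) \<in> mcirc (v a)) \<and>
     (\<forall>a b. v (And a b) \<in> mand (v a) (v b)) \<and>
     (\<forall>a b. v (Or a b) \<in> mor (v a) (v b)) \<and>
     (\<forall>a b. v (Imp a b) \<in> mimp (v a) (v b))"

definition F_Cila :: "(fm \<Rightarrow> tv) set" where
  "F_Cila = {v. valuation v \<and> (\<forall>a. v a = t \<longrightarrow> v (And a (Neg a)) = T)}"

definition RN_consequence :: "fm set \<Rightarrow> fm \<Rightarrow> bool" where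
  "RN_consequence \<Gamma> \<phi> \<longleftrightarrow>
     (\<forall>v \<in> F_Cila. v ` \<Gamma> \<subseteq> Dset \<longrightarrow> v \<phi> \<in> Dset)"

end

theory Submission
  imports Defs
begin

text \<open>Completeness by a canonical-model construction. If \<open>\<Gamma> \<nvdash> \<phi>\<close>, Zorn's lemma extends \<open>\<Gamma>\<close>
  to a set \<open>D\<close> that is maximal among the theories not deriving \<open>\<phi>\<close>. Such a \<open>D\<close> is closed under
  derivability and behaves classically on \<open>\<and>\<close>, \<open>\<or>\<close>, \<open>\<rightarrow>\<close>. A formula gets the value \<open>F\<close> if it is
  not in \<open>D\<close>, \<open>t\<close> if both it and its negation are in \<open>D\<close>, and \<open>T\<close> otherwise. The axioms for \<open>\<circ>\<close>
  show that \<open>\<circ>a \<in> D\<close> exactly when \<open>a\<close> does not get the value \<open>t\<close>, and propagation of \<open>\<circ>\<close>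
  through the connectives is what forces the classical (singleton) entries of the
  multioperations. The resulting valuation lies in \<open>F_Cila\<close>, satisfies \<open>\<Gamma>\<close> and refutes \<open>\<phi>\<close>.\<close>

lemma derives_mono: "cila_derives G a \<Longrightarrow> G \<subseteq> H \<Longrightarrow> cila_derives H a"
  by (induction rule: cila_derives.induct) (auto intro: cila_derives.intros)

lemma derives_finite_subset:
  "cila_derives G a \<Longrightarrow> \<exists>S. finite S \<and> S \<subseteq> G \<and> cila_derives S a"
proof (induction rule: cila_derives.induct)
  case (prem a G)
  then show ?case by (intro exI[of _ "{a}"]) (auto intro: cila_derives.prem)
next
  case (axiom a G)
  then show ?case by (intro exI[of _ "{}"]) (auto intro: cila_derives.axiom)
next
  case (mp G a b)
  then obtain S1 S2 where "finite S1" "S1 \<subseteq> G" "cila_derives S1 a"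
    and "finite S2" "S2 \<subseteq> G" "cila_derives S2 (Imp a b)" by blast
  then show ?case
    by (intro exI[of _ "S1 \<union> S2"]) (auto intro: cila_derives.mp derives_mono)
qed

lemma derives_Imp_refl: "cila_derives G (Imp a a)"
proof -
  have "cila_derives G (Imp (Imp a (Imp (Imp a a) a)) (Imp (Imp a (Imp a a)) (Imp a a)))"
    by (intro cila_derives.axiom Ax2)
  moreover have "cila_derives G (Imp a (Imp (Imp a a) a))" "cila_derives G (Imp a (Imp a a))"
    by (intro cila_derives.axiom Ax1)+
  ultimately show ?thesis by (meson cila_derives.mp)
qed

lemma deduction_theorem: "cila_derives (insert a G) b \<Longrightarrow> cila_derives G (Imp a b)"
proof (induction "insert a G" b rule: cila_derives.induct)
  case (prem c)
  show ?case
  proof (cases "c = a")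
    case True
    then show ?thesis by (simp add: derives_Imp_refl)
  next
    case False
    with prem have "cila_derives G c" by (auto intro: cila_derives.prem)
    then show ?thesis by (rule cila_derives.mp) (intro cila_derives.axiom Ax1)
  qed
next
  case (axiom c)
  then show ?case by (meson Ax1 cila_derives.axiom cila_derives.mp)
next
  case (mp c d)
  then show ?case by (meson Ax2 cila_derives.axiom cila_derives.mp)
qed

locale saturated =
  fixes D :: "fm set" and \<phi> :: fm
  assumes not_derives: "\<not> cila_derives D \<phi>"
    and insert_derives: "a \<notin> D \<Longrightarrow> cila_derives (insert a D) \<phi>"
begin

lemma derives_imp_mem: "cila_derives D a \<Longrightarrow> a \<in> D"
  using insert_derives deduction_theorem not_derives cila_derives.mp by blast

lemma axiom_mem: "cila_axiom a \<Longrightarrow> a \<in> D"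
  by (intro derives_imp_mem cila_derives.axiom)

lemma mp_mem: "a \<in> D \<Longrightarrow> Imp a b \<in> D \<Longrightarrow> b \<in> D"
  by (meson cila_derives.mp cila_derives.prem derives_imp_mem)

lemma goal_not_mem: "\<phi> \<notin> D"
  using not_derives cila_derives.prem by blast

lemma Imp_goal_mem: "a \<notin> D \<Longrightarrow> Imp a \<phi> \<in> D"
  using insert_derives deduction_theorem derives_imp_mem by blast

lemma Or_mem_iff: "Or a b \<in> D \<longleftrightarrow> a \<in> D \<or> b \<in> D"
proof
  assume "Or a b \<in> D"
  moreover have "Imp (Imp a \<phi>) (Imp (Imp b \<phi>) (Imp (Or a b) \<phi>)) \<in> D"
    by (intro axiom_mem Ax8)
  ultimately show "a \<in> D \<or> b \<in> D"
    using Imp_goal_mem mp_mem goal_not_mem by meson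
next
  assume "a \<in> D \<or> b \<in> D"
  then show "Or a b \<in> D" using mp_mem axiom_mem[OF Ax6] axiom_mem[OF Ax7] by blast
qed

lemma And_mem_iff: "And a b \<in> D \<longleftrightarrow> a \<in> D \<and> b \<in> D"
  using mp_mem axiom_mem[OF Ax3] axiom_mem[OF Ax4] axiom_mem[OF Ax5] by meson

lemma Imp_mem_iff: "Imp a b \<in> D \<longleftrightarrow> a \<notin> D \<or> b \<in> D"
  using mp_mem axiom_mem[OF Ax1] axiom_mem[OF Ax10] Or_mem_iff by meson

lemma mem_or_Neg_mem: "a \<in> D \<or> Neg a \<in> D"
  using axiom_mem[OF Ax9] Or_mem_iff by blast

lemma Neg_Neg_mem: "Neg (Neg a) \<in> D \<Longrightarrow> a \<in> D"
  using mp_mem axiom_mem[OF cf] by blast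

lemma Circ_mem_iff: "Circ a \<in> D \<longleftrightarrow> \<not> (a \<in> D \<and> Neg a \<in> D)"
proof
  assume "Circ a \<in> D"
  then show "\<not> (a \<in> D \<and> Neg a \<in> D)"
    using mp_mem axiom_mem[OF bc1[of a \<phi>]] goal_not_mem by blast
next
  assume "\<not> (a \<in> D \<and> Neg a \<in> D)"
  then have "Neg (And a (Neg a)) \<in> D" using And_mem_iff mem_or_Neg_mem by blast
  then show "Circ a \<in> D" using mp_mem axiom_mem[OF ci] by blast
qed

lemma Neg_Circ_mem_iff: "Neg (Circ a) \<in> D \<longleftrightarrow> Circ a \<notin> D"
proof
  assume "Neg (Circ a) \<in> D"
  then have "And a (Neg a) \<in> D" using mp_mem axiom_mem[OF cl] by blast
  then show "Circ a \<notin> D" unfolding And_mem_iff Circ_mem_iff by blast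
next
  assume "Circ a \<notin> D"
  then show "Neg (Circ a) \<in> D" using mem_or_Neg_mem by blast
qed

lemma Circ_connectives_mem:
  assumes "Circ a \<in> D" and "Circ b \<in> D"
  shows "Circ (Or a b) \<in> D" and "Circ (And a b) \<in> D" and "Circ (Imp a b) \<in> D"
proof -
  from assms have "And (Circ a) (Circ b) \<in> D" using And_mem_iff by blast
  then show "Circ (Or a b) \<in> D" "Circ (And a b) \<in> D" "Circ (Imp a b) \<in> D"
    using mp_mem axiom_mem[OF ca_or] axiom_mem[OF ca_and] axiom_mem[OF ca_imp] by blast+
qed

definition canonical_val :: "fm \<Rightarrow> tv" where
  "canonical_val a = (if a \<notin> D then F else if Neg a \<in> D then t else T)"

lemma canonical_val_designated_iff: "canonical_val a \<in> Dset \<longleftrightarrow> a \<in> D"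
  by (simp add: canonical_val_def Dset_def)

lemma canonical_val_Neg: "canonical_val (Neg a) \<in> mneg (canonical_val a)"
  using mem_or_Neg_mem[of a] Neg_Neg_mem[of a]
  by (auto simp: canonical_val_def Dset_def)

lemma canonical_val_Circ: "canonical_val (Circ a) \<in> mcirc (canonical_val a)"
  using Neg_Circ_mem_iff[of a] Circ_mem_iff[of a] by (auto simp: canonical_val_def)

lemma canonical_val_And: "canonical_val (And a b) \<in> mand (canonical_val a) (canonical_val b)"
  using And_mem_iff[of a b] Circ_mem_iff[of a] Circ_mem_iff[of b] Circ_mem_iff[of "And a b"]
    Circ_connectives_mem(2)[of a b]
  by (auto simp: mand_def Dset_def canonical_val_def)

lemma canonical_val_Or: "canonical_val (Or a b) \<in> mor (canonical_val a) (canonical_val b)"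
  using Or_mem_iff[of a b] Circ_mem_iff[of a] Circ_mem_iff[of b] Circ_mem_iff[of "Or a b"]
    Circ_connectives_mem(1)[of a b]
  by (auto simp: mor_def Dset_def canonical_val_def)

lemma canonical_val_Imp: "canonical_val (Imp a b) \<in> mimp (canonical_val a) (canonical_val b)"
  using Imp_mem_iff[of a b] Circ_mem_iff[of a] Circ_mem_iff[of b] Circ_mem_iff[of "Imp a b"]
    Circ_connectives_mem(3)[of a b]
  by (auto simp: mimp_def Dset_def canonical_val_def)

lemma canonical_val_contradiction: "canonical_val a = t \<Longrightarrow> canonical_val (And a (Neg a)) = T"
  using And_mem_iff[of a "Neg a"] Circ_mem_iff[of a] mp_mem[OF _ axiom_mem[OF ci[of a]]]
  by (auto simp: canonical_val_def split: if_splits)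

lemma canonical_val_in_F_Cila: "canonical_val \<in> F_Cila"
  unfolding F_Cila_def valuation_def
  using canonical_val_Neg canonical_val_Circ canonical_val_And canonical_val_Or canonical_val_Imp
    canonical_val_contradiction by blast

end

lemma lindenbaum:
  assumes "\<not> cila_derives G \<phi>"
  shows "\<exists>D. G \<subseteq> D \<and> saturated D \<phi>"
proof -
  let ?A = "{D. G \<subseteq> D \<and> \<not> cila_derives D \<phi>}"
  have "\<exists>M\<in>?A. \<forall>X\<in>?A. M \<subseteq> X \<longrightarrow> X = M"
  proof (rule subset_Zorn_nonempty)
    show "?A \<noteq> {}" using assms by blast
  next
    fix C assume ne: "C \<noteq> {}" and chain: "subset.chain ?A C"
    then have sub: "C \<subseteq> ?A" by (simp add: subset_chain_def)
    have "\<not> cila_derives (\<Union>C) \<phi>"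
    proof
      assume "cila_derives (\<Union>C) \<phi>"
      then obtain S where S: "finite S" "S \<subseteq> \<Union>C" "cila_derives S \<phi>"
        using derives_finite_subset by blast
      then obtain B where "B \<in> C" "S \<subseteq> B"
        using finite_subset_Union_chain[OF S(1,2) ne chain] by blast
      then show False using S(3) sub derives_mono by blast
    qed
    with ne sub show "\<Union>C \<in> ?A" by blast
  qed
  then obtain M where M: "M \<in> ?A" and maximal: "\<forall>X\<in>?A. M \<subseteq> X \<longrightarrow> X = M" by blast
  have "saturated M \<phi>"
  proof
    show "\<not> cila_derives M \<phi>" using M by blast
    fix a assume "a \<notin> M"
    with M maximal show "cila_derives (insert a M) \<phi>" by blast
  qed
  with M show ?thesis by blast
qed

theorem mainTheorem7:
  fixes \<Gamma> :: "fm set" and \<phi> :: fm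
  assumes "RN_consequence \<Gamma> \<phi>"
  shows "cila_derives \<Gamma> \<phi>"
proof (rule ccontr)
  assume "\<not> cila_derives \<Gamma> \<phi>"
  then obtain D where "\<Gamma> \<subseteq> D" and "saturated D \<phi>" using lindenbaum by blast
  interpret saturated D \<phi> by fact
  have "canonical_val ` \<Gamma> \<subseteq> Dset"
    using \<open>\<Gamma> \<subseteq> D\<close> canonical_val_designated_iff by blast
  then have "canonical_val \<phi> \<in> Dset"
    using assms canonical_val_in_F_Cila unfolding RN_consequence_def by blast
  then show False using goal_not_mem canonical_val_designated_iff by blast
qed

end
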